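(* Let $\{X_n;\,n\ge1\}$ be independent copies of a $\mathbf B$-valued random variable $X$ with $\mathbb E\|X\|<\infty$. Define $S_n^{(1)}=\sum_{k=1}^nX_kI\{\|X_k\|\le k\}$ and $U_n=\sum_{k=1}^nX_kI\{\|X_k\|\le n\}$, $n\ge1$. Then (i) $\sum_{n=1}^\infty\frac1n\left(\frac{\|\mathbb ES_n^{(1)}\|}{n}\right)<\infty$ if and only if $\sum_{n=1}^\infty\frac{\|\mathbb EXI\{\|X\|\le n\}\|}{n}<\infty$; (ii) $\sum_{n=1}^\infty\frac1n\left(\frac{\mathbb E\|S_n^{(1)}-\mathbb ES_n^{(1)}\|}{n}\right)<\infty$ if and only if $\sum_{n=1}^\infty\frac1n\left(\frac{\mathbb E\|U_n-\mathbb EU_n\|}{n}\right)<\infty$.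
   Context: $(\mathbf{B},\|\cdot\|)$ is a real separable Banach space with its Borel $\sigma$-algebra. $\mathbb{E}$ of a $\mathbf B$-valued random variable denotes the Pettis integral. $I\{\cdot\}$ denotes an indicator. *)

theory Defs
  imports "HOL-Probability.Probability"
begin

text \<open>Truncated partial sums. The sequence Xs is indexed from 1 (Xs 0 is unused).
  S1 Xs n = sum over k=1..n of X_k I{norm X_k <= k};
  Utr Xs n = sum over k=1..n of X_k I{norm X_k <= n}.\<close>

definition S1 :: "(nat \<Rightarrow> 'a \<Rightarrow> 'b::real_normed_vector) \<Rightarrow> nat \<Rightarrow> 'a \<Rightarrow> 'b" where
  "S1 Xs n \<omega> = (\<Sum>k\<in>{1..n}. if norm (Xs k \<omega>) \<le> real k then Xs k \<omega> else 0)"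

definition Utr :: "(nat \<Rightarrow> 'a \<Rightarrow> 'b::real_normed_vector) \<Rightarrow> nat \<Rightarrow> 'a \<Rightarrow> 'b" where
  "Utr Xs n \<omega> = (\<Sum>k\<in>{1..n}. if norm (Xs k \<omega>) \<le> real n then Xs k \<omega> else 0)"

end

theory Submission
  imports Defs
begin

(* Write trunc r x = x I{norm x <= r}.  For k <= m the difference
   trunc k x - trunc m x vanishes unless k < norm x <= m, so summing over k = 1..m
   gives the pointwise "truncation gap"  gap m t = t * #{k in 1..m. k < t}  (for t <= m,
   and 0 for t > m), where t = norm x.  Since gap m t <= t^2 I{t <= m} and
   sum_{n >= t} 1/n^2 <= 2/t, we get  sum_n gap n t / n^2 <= 2 t,  hence
   sum_n E gap n (norm X) / n^2 <= 2 E norm X < oo.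
   Both pairs of series in the theorem differ termwise by at most a multiple of
   E gap n (norm X) / n^2:  norm (E S1_n - n E trunc n X) <= E gap n (norm X), and
   E norm (S1_n - U_n) <= E gap n (norm X).  Two series of nonnegative terms whose
   difference is dominated by a summable series converge together. *)

lemma summable_iff_close:
  fixes f g h :: "nat \<Rightarrow> real"
  assumes "\<And>n. 0 \<le> f n" "\<And>n. 0 \<le> g n" "\<And>n. \<bar>f n - g n\<bar> \<le> h n" "summable h"
  shows "summable f \<longleftrightarrow> summable g"
proof
  assume "summable f"
  show "summable g"
  proof (rule summable_comparison_test'[OF summable_add[OF \<open>summable f\<close> \<open>summable h\<close>]])
    fix n show "norm (g n) \<le> f n + h n" using assms(2,3)[of n] by (simp add: abs_le_iff)
  qed
next
  assume "summable g"
  show "summable f"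
  proof (rule summable_comparison_test'[OF summable_add[OF \<open>summable g\<close> \<open>summable h\<close>]])
    fix n show "norm (f n) \<le> g n + h n" using assms(1,3)[of n] by (simp add: abs_le_iff)
  qed
qed

text \<open>The tail of \<open>\<Sum> 1/n\<^sup>2\<close> from \<open>t\<close> on is at most \<open>2/t\<close>; the partial sums are
  controlled by the telescoping bound \<open>2/t - 1/N\<close>.\<close>

lemma inverse_square_tail_partial:
  fixes t :: real assumes "t > 0"
  shows "(\<Sum>n<N. if t \<le> real (Suc n) then 1 / (real (Suc n))\<^sup>2 else 0)
     \<le> (if t \<le> real N then 2 / t - 1 / real N else 0)"
proof (induction N)
  case 0 thus ?case using assms by simp
next
  case (Suc N)
  show ?case
  proof (cases "t \<le> real N")
    case True
    hence N: "N \<ge> 1" using assms by (cases N) auto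
    have "1 / (real (Suc N))\<^sup>2 \<le> 1 / (real N * real (Suc N))"
      using N by (intro divide_left_mono) (auto simp: power2_eq_square intro!: mult_right_mono)
    also have "\<dots> = 1 / real N - 1 / real (Suc N)"
      using N by (simp add: field_simps)
    finally have "1 / (real (Suc N))\<^sup>2 \<le> 1 / real N - 1 / real (Suc N)" .
    thus ?thesis using Suc True by simp
  next
    case False
    have "1 / (real (Suc N))\<^sup>2 \<le> 1 / real (Suc N)"
      by (intro divide_left_mono) (auto simp: power2_eq_square)
    moreover have "t \<le> real (Suc N) \<Longrightarrow> 2 / real (Suc N) \<le> 2 / t"
      using assms by (intro divide_left_mono) auto
    ultimately show ?thesis using Suc False by (simp del: of_nat_Suc) linarith
  qed
qed

lemma inverse_square_tail:
  fixes t :: real assumes "t > 0"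
  shows "(\<Sum>n<N. if t \<le> real (Suc n) then 1 / (real (Suc n))\<^sup>2 else 0) \<le> 2 / t"
proof -
  have "(if t \<le> real N then 2 / t - 1 / real N else 0) \<le> 2 / t"
    using assms by simp
  with inverse_square_tail_partial[OF assms, of N] show ?thesis by linarith
qed

definition trunc :: "real \<Rightarrow> 'b::real_normed_vector \<Rightarrow> 'b" where
  "trunc r x = (if norm x \<le> r then x else 0)"

definition trunc_gap :: "nat \<Rightarrow> real \<Rightarrow> real" where
  "trunc_gap m t = (\<Sum>k\<in>{1..m}. if real k < t \<and> t \<le> real m then t else 0)"

lemma norm_trunc_diff:
  "k \<le> m \<Longrightarrow> norm (trunc k x - trunc m x) = (if k < norm x \<and> norm x \<le> m then norm x else 0)"
  by (auto simp: trunc_def)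

lemma sum_norm_trunc_diff:
  "(\<Sum>k\<in>{1..m}. norm (trunc (real k) x - trunc (real m) x)) = trunc_gap m (norm x)"
  unfolding trunc_gap_def by (intro sum.cong refl) (simp add: norm_trunc_diff)

lemma trunc_gap_nonneg: "t \<ge> 0 \<Longrightarrow> 0 \<le> trunc_gap m t"
  unfolding trunc_gap_def by (intro sum_nonneg) auto

text \<open>A crude uniform bound, used only for integrability.\<close>

lemma trunc_gap_le_square: "trunc_gap m t \<le> real m * real m"
  unfolding trunc_gap_def using sum_bounded_above[of "{1..m}" _ "real m"] by auto

lemma count_below_le:
  fixes t :: real assumes "t \<ge> 0"
  shows "(\<Sum>k\<in>{1..m}. if real k < t then 1 else 0::real) \<le> min t (real m)"
  using assms by (induction m) (auto simp: sum.cl_ivl_Suc)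

lemma trunc_gap_le:
  fixes t :: real assumes "t \<ge> 0"
  shows "trunc_gap m t \<le> (if t \<le> real m then t * t else 0)"
proof (cases "t \<le> real m")
  case True
  have "trunc_gap m t = t * (\<Sum>k\<in>{1..m}. if real k < t then 1 else 0::real)"
    unfolding trunc_gap_def sum_distrib_left using True by (intro sum.cong) auto
  also have "\<dots> \<le> t * t" using count_below_le[OF assms, of m] assms
    by (intro mult_left_mono) auto
  finally show ?thesis using True by simp
qed (simp add: trunc_gap_def)

lemma trunc_gap_weighted_sum:
  fixes t :: real assumes "t \<ge> 0"
  shows "(\<Sum>n<N. trunc_gap (Suc n) t / (real (Suc n))\<^sup>2) \<le> 2 * t"
proof (cases "t = 0")
  case True thus ?thesis unfolding trunc_gap_def by simp
next
  case False
  hence t: "t > 0" using assms by simp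
  have "(\<Sum>n<N. trunc_gap (Suc n) t / (real (Suc n))\<^sup>2)
      \<le> (\<Sum>n<N. t * t * (if t \<le> real (Suc n) then 1 / (real (Suc n))\<^sup>2 else 0))"
  proof (intro sum_mono)
    fix n
    have "trunc_gap (Suc n) t / (real (Suc n))\<^sup>2
        \<le> (if t \<le> real (Suc n) then t * t else 0) / (real (Suc n))\<^sup>2"
      using trunc_gap_le[OF assms, of "Suc n"] by (intro divide_right_mono) (simp_all del: of_nat_Suc)
    thus "trunc_gap (Suc n) t / (real (Suc n))\<^sup>2
        \<le> t * t * (if t \<le> real (Suc n) then 1 / (real (Suc n))\<^sup>2 else 0)"
      by (simp split: if_splits del: of_nat_Suc)
  qed
  also have "\<dots> = t * t * (\<Sum>n<N. if t \<le> real (Suc n) then 1 / (real (Suc n))\<^sup>2 else 0)"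
    by (simp add: sum_distrib_left)
  also have "\<dots> \<le> t * t * (2 / t)"
    using inverse_square_tail[OF t, of N] by (intro mult_left_mono) auto
  also have "\<dots> = 2 * t" using t by simp
  finally show ?thesis .
qed

lemma borel_measurable_trunc [measurable]: "trunc r \<in> borel_measurable borel"
  unfolding trunc_def by measurable

lemma borel_measurable_trunc_gap [measurable]: "trunc_gap m \<in> borel_measurable borel"
  unfolding trunc_gap_def by measurable

lemma S1_trunc: "S1 Xs n = (\<lambda>\<omega>. \<Sum>k\<in>{1..n}. trunc (real k) (Xs k \<omega>))"
  by (simp add: S1_def trunc_def fun_eq_iff)

lemma Utr_trunc: "Utr Xs n = (\<lambda>\<omega>. \<Sum>k\<in>{1..n}. trunc (real n) (Xs k \<omega>))"
  by (simp add: Utr_def trunc_def fun_eq_iff)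

context prob_space
begin

lemma integrable_trunc:
  fixes Y :: "'a \<Rightarrow> 'b::{banach, second_countable_topology}"
  assumes "Y \<in> borel_measurable M"
  shows "integrable M (\<lambda>\<omega>. trunc r (Y \<omega>))"
  by (rule integrable_const_bound[where B="max r 0"]) (use assms in \<open>auto simp: trunc_def\<close>)

lemma integrable_trunc_gap:
  assumes "Y \<in> borel_measurable M"
  shows "integrable M (\<lambda>\<omega>. trunc_gap m (norm (Y \<omega>)))"
  by (rule integrable_const_bound[where B="real m * real m"])
     (use assms in \<open>auto simp: trunc_gap_nonneg trunc_gap_le_square\<close>)

lemma mean_deviation_le:
  fixes A B :: "'a \<Rightarrow> 'b::{banach, second_countable_topology}"
  assumes A: "integrable M A" and B: "integrable M B"
  shows "expectation (\<lambda>\<omega>. norm (A \<omega> - expectation A))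
      \<le> expectation (\<lambda>\<omega>. norm (B \<omega> - expectation B)) + 2 * expectation (\<lambda>\<omega>. norm (A \<omega> - B \<omega>))"
proof -
  let ?D = "expectation (\<lambda>\<omega>. norm (A \<omega> - B \<omega>))"
  have means: "norm (expectation A - expectation B) \<le> ?D"
    using integral_norm_bound[of M "\<lambda>\<omega>. A \<omega> - B \<omega>"] by (simp add: A B)
  have "expectation (\<lambda>\<omega>. norm (A \<omega> - expectation A))
      \<le> expectation (\<lambda>\<omega>. norm (B \<omega> - expectation B) + norm (A \<omega> - B \<omega>)
                                + norm (expectation A - expectation B))"
  proof (rule integral_mono)
    fix \<omega>
    have "norm (A \<omega> - expectation A)
        = norm ((B \<omega> - expectation B) + (A \<omega> - B \<omega>) - (expectation A - expectation B))"
      by (simp add: algebra_simps)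
    also have "\<dots> \<le> norm (B \<omega> - expectation B) + norm (A \<omega> - B \<omega>)
                    + norm (expectation A - expectation B)"
      using norm_triangle_ineq[of "B \<omega> - expectation B" "A \<omega> - B \<omega>"]
        norm_triangle_ineq4[of "(B \<omega> - expectation B) + (A \<omega> - B \<omega>)" "expectation A - expectation B"]
      by linarith
    finally show "norm (A \<omega> - expectation A) \<le> norm (B \<omega> - expectation B) + norm (A \<omega> - B \<omega>)
                                         + norm (expectation A - expectation B)" .
  qed (use A B in auto)
  also have "\<dots> = expectation (\<lambda>\<omega>. norm (B \<omega> - expectation B)) + ?D
                  + norm (expectation A - expectation B)"
    using A B by (simp add: prob_space)
  finally show ?thesis using means by linarith
qed

end

text \<open>A sequence \<open>X\<^sub>1, X\<^sub>2, \<dots>\<close> of random variables (index 0 unused), each distributed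
  like \<open>X\<close>.  No independence is assumed.\<close>

locale ident_distr_seq = prob_space M
  for M :: "'a measure" +
  fixes X :: "'a \<Rightarrow> 'b::{banach, second_countable_topology}"
    and Xs :: "nat \<Rightarrow> 'a \<Rightarrow> 'b"
  assumes X_measurable [measurable]: "X \<in> borel_measurable M"
    and Xs_measurable: "\<And>k. k \<ge> 1 \<Longrightarrow> Xs k \<in> borel_measurable M"
    and Xs_distr: "\<And>k. k \<ge> 1 \<Longrightarrow> distr M borel (Xs k) = distr M borel X"
begin

lemma expectation_Xs:
  fixes f :: "'b \<Rightarrow> 'c::{banach, second_countable_topology}"
  assumes "k \<ge> 1" "f \<in> borel_measurable borel"
  shows "expectation (\<lambda>\<omega>. f (Xs k \<omega>)) = expectation (\<lambda>\<omega>. f (X \<omega>))"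
  by (metis assms integral_distr Xs_distr Xs_measurable X_measurable)

lemma integrable_S1: "integrable M (S1 Xs n)"
  unfolding S1_trunc by (intro Bochner_Integration.integrable_sum integrable_trunc Xs_measurable) auto

lemma integrable_Utr: "integrable M (Utr Xs n)"
  unfolding Utr_trunc by (intro Bochner_Integration.integrable_sum integrable_trunc Xs_measurable) auto

definition gap_mean :: "nat \<Rightarrow> real" where
  "gap_mean m = expectation (\<lambda>\<omega>. trunc_gap m (norm (X \<omega>)))"

lemma gap_mean_nonneg: "0 \<le> gap_mean m"
  unfolding gap_mean_def by (intro integral_nonneg_AE) (auto simp: trunc_gap_nonneg)

lemma summable_gap_mean:
  assumes "integrable M (\<lambda>\<omega>. norm (X \<omega>))"
  shows "summable (\<lambda>n. gap_mean (Suc n) / (real (Suc n))\<^sup>2)"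
proof (rule summableI_nonneg_bounded[where x="2 * expectation (\<lambda>\<omega>. norm (X \<omega>))"])
  fix n show "0 \<le> gap_mean (Suc n) / (real (Suc n))\<^sup>2"
    by (simp add: gap_mean_nonneg)
next
  fix N
  have "(\<Sum>n<N. gap_mean (Suc n) / (real (Suc n))\<^sup>2)
      = expectation (\<lambda>\<omega>. \<Sum>n<N. trunc_gap (Suc n) (norm (X \<omega>)) / (real (Suc n))\<^sup>2)"
    unfolding gap_mean_def
    by (subst Bochner_Integration.integral_sum) (auto intro!: integrable_divide integrable_trunc_gap)
  also have "\<dots> \<le> expectation (\<lambda>\<omega>. 2 * norm (X \<omega>))"
    by (rule integral_mono)
       (auto intro!: Bochner_Integration.integrable_sum integrable_divide integrable_trunc_gap assms
                     trunc_gap_weighted_sum simp del: of_nat_Suc)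
  finally show "(\<Sum>n<N. gap_mean (Suc n) / (real (Suc n))\<^sup>2) \<le> 2 * expectation (\<lambda>\<omega>. norm (X \<omega>))"
    by simp
qed

lemma mean_S1_close:
  "norm (expectation (S1 Xs m) - real m *\<^sub>R expectation (\<lambda>\<omega>. trunc (real m) (X \<omega>))) \<le> gap_mean m"
proof -
  let ?d = "\<lambda>k \<omega>. trunc (real k) (X \<omega>) - trunc (real m) (X \<omega>)"
  have "expectation (S1 Xs m) = (\<Sum>k\<in>{1..m}. expectation (\<lambda>\<omega>. trunc (real k) (X \<omega>)))"
    unfolding S1_trunc
    by (subst Bochner_Integration.integral_sum)
       (auto intro!: integrable_trunc Xs_measurable sum.cong expectation_Xs)
  hence "expectation (S1 Xs m) - real m *\<^sub>R expectation (\<lambda>\<omega>. trunc (real m) (X \<omega>))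
      = expectation (\<lambda>\<omega>. \<Sum>k\<in>{1..m}. ?d k \<omega>)"
    by (simp add: sum_subtractf sum_constant_scaleR integrable_trunc)
  also have "norm \<dots> \<le> expectation (\<lambda>\<omega>. norm (\<Sum>k\<in>{1..m}. ?d k \<omega>))"
    by (rule integral_norm_bound)
  also have "\<dots> \<le> gap_mean m"
    unfolding gap_mean_def
  proof (rule integral_mono)
    fix \<omega>
    show "norm (\<Sum>k\<in>{1..m}. ?d k \<omega>) \<le> trunc_gap m (norm (X \<omega>))"
      unfolding sum_norm_trunc_diff[symmetric] by (rule norm_sum)
  qed (auto intro!: integrable_norm Bochner_Integration.integrable_sum
                    Bochner_Integration.integrable_diff integrable_trunc integrable_trunc_gap)
  finally show ?thesis .
qed

text \<open>\<open>S1\<^sub>m\<close> and \<open>U\<^sub>m\<close> are within \<open>gap_mean m\<close> of each other in \<open>L\<^sup>1\<close>: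
  the \<open>k\<close>-th summands differ by \<open>norm (trunc k X\<^sub>k - trunc m X\<^sub>k)\<close>, whose expectations
  add up to \<open>gap_mean m\<close> because \<open>X\<^sub>k\<close> is distributed like \<open>X\<close>.\<close>

lemma S1_Utr_close: "expectation (\<lambda>\<omega>. norm (S1 Xs m \<omega> - Utr Xs m \<omega>)) \<le> gap_mean m"
proof -
  let ?d = "\<lambda>k x. norm (trunc (real k) x - trunc (real m) x)"
  have "expectation (\<lambda>\<omega>. norm (S1 Xs m \<omega> - Utr Xs m \<omega>))
      \<le> expectation (\<lambda>\<omega>. \<Sum>k\<in>{1..m}. ?d k (Xs k \<omega>))"
  proof (rule integral_mono)
    fix \<omega>
    have "S1 Xs m \<omega> - Utr Xs m \<omega> = (\<Sum>k\<in>{1..m}. trunc (real k) (Xs k \<omega>) - trunc (real m) (Xs k \<omega>))"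
      by (simp add: S1_trunc Utr_trunc sum_subtractf)
    thus "norm (S1 Xs m \<omega> - Utr Xs m \<omega>) \<le> (\<Sum>k\<in>{1..m}. ?d k (Xs k \<omega>))"
      by (simp add: norm_sum)
  qed (auto intro!: integrable_S1 integrable_Utr Bochner_Integration.integrable_sum
                    integrable_norm Bochner_Integration.integrable_diff integrable_trunc Xs_measurable)
  also have "\<dots> = (\<Sum>k\<in>{1..m}. expectation (\<lambda>\<omega>. ?d k (X \<omega>)))"
    by (subst Bochner_Integration.integral_sum)
       (auto intro!: integrable_norm Bochner_Integration.integrable_diff integrable_trunc
                     Xs_measurable sum.cong expectation_Xs)
  also have "\<dots> = gap_mean m"
    unfolding gap_mean_def sum_norm_trunc_diff[symmetric]
    by (subst Bochner_Integration.integral_sum)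
       (auto intro!: integrable_norm Bochner_Integration.integrable_diff integrable_trunc)
  finally show ?thesis .
qed

lemma mean_S1_term_close:
  "\<bar>1 / real m * (norm (expectation (S1 Xs m)) / real m)
      - norm (expectation (\<lambda>\<omega>. trunc (real m) (X \<omega>))) / real m\<bar> \<le> gap_mean m / (real m)\<^sup>2"
proof -
  let ?S = "expectation (S1 Xs m)" and ?a = "expectation (\<lambda>\<omega>. trunc (real m) (X \<omega>))"
  have "1 / real m * (norm ?S / real m) - norm ?a / real m
      = (norm ?S - norm (real m *\<^sub>R ?a)) / (real m)\<^sup>2"
    by (cases "m = 0") (simp_all add: power2_eq_square field_simps)
  hence "\<bar>1 / real m * (norm ?S / real m) - norm ?a / real m\<bar>
      = \<bar>norm ?S - norm (real m *\<^sub>R ?a)\<bar> / (real m)\<^sup>2"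
    by simp
  also have "\<dots> \<le> norm (?S - real m *\<^sub>R ?a) / (real m)\<^sup>2"
    by (intro divide_right_mono norm_triangle_ineq3) simp
  also have "\<dots> \<le> gap_mean m / (real m)\<^sup>2"
    using mean_S1_close by (intro divide_right_mono) auto
  finally show ?thesis .
qed

lemma deviation_term_close:
  "\<bar>1 / real m * (expectation (\<lambda>\<omega>. norm (S1 Xs m \<omega> - expectation (S1 Xs m))) / real m)
      - 1 / real m * (expectation (\<lambda>\<omega>. norm (Utr Xs m \<omega> - expectation (Utr Xs m))) / real m)\<bar>
    \<le> 2 * (gap_mean m / (real m)\<^sup>2)"
proof -
  let ?A = "expectation (\<lambda>\<omega>. norm (S1 Xs m \<omega> - expectation (S1 Xs m)))"
  let ?B = "expectation (\<lambda>\<omega>. norm (Utr Xs m \<omega> - expectation (Utr Xs m)))"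
  have "expectation (\<lambda>\<omega>. norm (Utr Xs m \<omega> - S1 Xs m \<omega>)) \<le> gap_mean m"
    using S1_Utr_close by (simp add: norm_minus_commute)
  hence "\<bar>?A - ?B\<bar> \<le> 2 * gap_mean m"
    using mean_deviation_le[OF integrable_S1 integrable_Utr, of m m]
      mean_deviation_le[OF integrable_Utr integrable_S1, of m m] S1_Utr_close[of m]
    by linarith
  hence "\<bar>?A - ?B\<bar> / (real m)\<^sup>2 \<le> 2 * gap_mean m / (real m)\<^sup>2"
    by (intro divide_right_mono) auto
  thus ?thesis
    by (simp add: power2_eq_square field_simps diff_divide_distrib[symmetric])
qed

end

theorem lemma5p2:
  fixes M :: "'a measure"
    and X :: "'a \<Rightarrow> 'b::{banach, second_countable_topology}"
    and Xs :: "nat \<Rightarrow> 'a \<Rightarrow> 'b"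
  assumes "prob_space M"
    and "X \<in> borel_measurable M"
    and "integrable M (\<lambda>\<omega>. norm (X \<omega>))"
    and "prob_space.indep_vars M (\<lambda>_. borel) Xs {1..}"
    and "\<And>n. n \<ge> 1 \<Longrightarrow> distr M borel (Xs n) = distr M borel X"
  shows "(summable (\<lambda>n. (1 / real (Suc n)) * (norm (integral\<^sup>L M (S1 Xs (Suc n))) / real (Suc n)))
           \<longleftrightarrow> summable (\<lambda>n. norm (integral\<^sup>L M (\<lambda>\<omega>. if norm (X \<omega>) \<le> real (Suc n) then X \<omega> else 0))
                                / real (Suc n)))
       \<and> (summable (\<lambda>n. (1 / real (Suc n)) *
              ((integral\<^sup>L M (\<lambda>\<omega>. norm (S1 Xs (Suc n) \<omega> - integral\<^sup>L M (S1 Xs (Suc n))))) / real (Suc n)))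
           \<longleftrightarrow> summable (\<lambda>n. (1 / real (Suc n)) *
              ((integral\<^sup>L M (\<lambda>\<omega>. norm (Utr Xs (Suc n) \<omega> - integral\<^sup>L M (Utr Xs (Suc n))))) / real (Suc n))))"
proof -
  interpret prob_space M by fact
  have "\<And>k. k \<ge> 1 \<Longrightarrow> Xs k \<in> borel_measurable M"
    using assms(4) unfolding indep_vars_def by auto
  then interpret ident_distr_seq M X Xs
    using assms(2,5) by unfold_locales
  note gap = summable_gap_mean[OF assms(3)]
  have "summable (\<lambda>n. (1 / real (Suc n)) * (norm (integral\<^sup>L M (S1 Xs (Suc n))) / real (Suc n)))
    \<longleftrightarrow> summable (\<lambda>n. norm (integral\<^sup>L M (\<lambda>\<omega>. trunc (real (Suc n)) (X \<omega>))) / real (Suc n))"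
    by (rule summable_iff_close[OF _ _ mean_S1_term_close gap]) auto
  moreover have "summable (\<lambda>n. (1 / real (Suc n)) *
              ((integral\<^sup>L M (\<lambda>\<omega>. norm (S1 Xs (Suc n) \<omega> - integral\<^sup>L M (S1 Xs (Suc n))))) / real (Suc n)))
           \<longleftrightarrow> summable (\<lambda>n. (1 / real (Suc n)) *
              ((integral\<^sup>L M (\<lambda>\<omega>. norm (Utr Xs (Suc n) \<omega> - integral\<^sup>L M (Utr Xs (Suc n))))) / real (Suc n)))"
    by (rule summable_iff_close[OF _ _ deviation_term_close summable_mult[OF gap]])
       (auto intro!: integral_nonneg_AE)
  ultimately show ?thesis unfolding trunc_def by blast
qed

end
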